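(* Let $X$ be a compact metric space and $T:X\to X$ a local homeomorphism. Then \[{\rm dim}_{\rm tow}(X,T)\le 2\,{\rm dim}_{\rm Rok}(X,T)+1.\]
   Context: For $j\ge0$, $T^{-j}(A)$ is the preimage under $T^j$. Rokhlin dimension: an open $N$-Rokhlin tower is a collection $\{U_0,\dots,U_{N-1}\}$ of nonempty open sets with $U_k=T^{-1}(U_{k-1})$ for $k\ge1$ and pairwise disjoint closures; ${\rm dim}_{\rm Rok}(X,T)$ is the least $d$ such that for every $N\ge1$, $X$ is covered by the members of at most $d+1$ open $N$-Rokhlin towers. Tower dimension: ${\rm dim}_{\rm tow}(X,T)$ is the least $d\in\mathbb{N}$ such that for every finite $E\subseteq\mathbb{Z}$ there are finitely many pairs $(V_1,S_1),\dots,(V_s,S_s)$ with $V_i\subseteq X$ open and $S_i\subseteq\mathbb{N}$ finite such that: (a) $T^{-m}(\overline{V_i})\cap T^{-n}(\overline{V_i})=\varnothing$ for distinct $m,n\in S_i$; (b) the family $\{T^{-n}(V_i):n\in S_i,1\le i\le s\}$ has chromatic number at most $d+1$, i.e. can be partitioned into at most $d+1$ subfamilies each consisting of pairwise disjoint sets; (c) this family covers $X$; (d) for every $x\in X$ there are $i$ and $n\in S_i$ with $x\in T^{-n}(V_i)$ and $E+n\subseteq S_i$. (Value $\infty$ if no such $d$.) *)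

theory Defs
  imports "HOL-Analysis.Analysis"
begin

definition preim :: "'a set \<Rightarrow> ('a \<Rightarrow> 'a) \<Rightarrow> nat \<Rightarrow> 'a set \<Rightarrow> 'a set" where
  "preim X T j A = {x \<in> X. (T ^^ j) x \<in> A}"

definition local_homeo :: "'a::topological_space set \<Rightarrow> ('a \<Rightarrow> 'a) \<Rightarrow> bool" where
  "local_homeo X T \<longleftrightarrow> T ` X \<subseteq> X \<and>
     (\<forall>x\<in>X. \<exists>U g. openin (top_of_set X) U \<and> x \<in> U \<and>
        openin (top_of_set X) (T ` U) \<and> homeomorphism U (T ` U) T g)"

definition rok_tower :: "'a::topological_space set \<Rightarrow> ('a \<Rightarrow> 'a) \<Rightarrow> nat \<Rightarrow> (nat \<Rightarrow> 'a set) \<Rightarrow> bool" where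
  "rok_tower X T N U \<longleftrightarrow>
     (\<forall>k<N. U k \<noteq> {} \<and> openin (top_of_set X) (U k)) \<and>
     (\<forall>k. 1 \<le> k \<and> k < N \<longrightarrow> U k = preim X T 1 (U (k - 1))) \<and>
     (\<forall>j<N. \<forall>k<N. j \<noteq> k \<longrightarrow> closure (U j) \<inter> closure (U k) = {})"

definition rok_cond :: "'a::topological_space set \<Rightarrow> ('a \<Rightarrow> 'a) \<Rightarrow> nat \<Rightarrow> bool" where
  "rok_cond X T d \<longleftrightarrow> (\<forall>N\<ge>1. \<exists>m Us. m \<le> d + 1 \<and>
      (\<forall>i<m. rok_tower X T N (Us i)) \<and> X \<subseteq> (\<Union>i<m. \<Union>k<N. Us i k))"

definition dim_Rok :: "'a::topological_space set \<Rightarrow> ('a \<Rightarrow> 'a) \<Rightarrow> enat" where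
  "dim_Rok X T = (INF d \<in> {d. rok_cond X T d}. enat d)"

text \<open>Tower-dimension condition for d: pairs (V i, S i), i < s; the family
  {T^{-n}(V i)} is indexed by the pairs (i,n) and coloured by c with values \<le> d.\<close>
definition tow_cond :: "'a::topological_space set \<Rightarrow> ('a \<Rightarrow> 'a) \<Rightarrow> nat \<Rightarrow> bool" where
  "tow_cond X T d \<longleftrightarrow> (\<forall>E :: int set. finite E \<longrightarrow>
     (\<exists>(s::nat) (V :: nat \<Rightarrow> 'a set) (S :: nat \<Rightarrow> nat set) (c :: nat \<Rightarrow> nat \<Rightarrow> nat).
        (\<forall>i<s. openin (top_of_set X) (V i) \<and> finite (S i)) \<and>
        (\<forall>i<s. \<forall>m\<in>S i. \<forall>n\<in>S i. m \<noteq> n \<longrightarrow>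
            preim X T m (closure (V i)) \<inter> preim X T n (closure (V i)) = {}) \<and>
        (\<forall>i<s. \<forall>n\<in>S i. c i n \<le> d) \<and>
        (\<forall>i<s. \<forall>n\<in>S i. \<forall>j<s. \<forall>m\<in>S j. (i, n) \<noteq> (j, m) \<and> c i n = c j m \<longrightarrow>
            preim X T n (V i) \<inter> preim X T m (V j) = {}) \<and>
        X \<subseteq> (\<Union>i<s. \<Union>n\<in>S i. preim X T n (V i)) \<and>
        (\<forall>x\<in>X. \<exists>i<s. \<exists>n\<in>S i. x \<in> preim X T n (V i) \<and>
            (\<forall>e\<in>E. \<exists>k\<in>S i. int k = e + int n))))"

definition dim_tow :: "'a::topological_space set \<Rightarrow> ('a \<Rightarrow> 'a) \<Rightarrow> enat" where
  "dim_tow X T = (INF d \<in> {d. tow_cond X T d}. enat d)"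

end

theory Submission
  imports Defs
begin

text \<open>
  Given a finite \<open>E \<subseteq> [-M, M]\<close>, take at most \<open>d + 1\<close> Rokhlin towers of height \<open>N = 4M + 4\<close>
  and replace each base \<open>U_0\<close> by the two pairs \<open>(U_0, [0, N))\<close> and \<open>(U_0, [h, h + N))\<close>,
  \<open>h = 2M + 2\<close>, each with a colour of its own, giving \<open>2(d + 1)\<close> colours. If \<open>T^M x\<close> lies in
  level \<open>l\<close> of a tower then \<open>x \<in> T^-(l+M) U_0\<close>, and one of the two windows contains \<open>l + M + E\<close>.
  Inside a window the sets \<open>T^-n (cl U_0)\<close> are disjoint: \<open>T\<close> is an open map, so
  \<open>T^-c (cl U_0) \<subseteq> cl (T^-c U_0) = cl U_c\<close>, and distinct levels have disjoint closures.
\<close>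

lemma funpow_in_invariant: "T ` X \<subseteq> X \<Longrightarrow> x \<in> X \<Longrightarrow> (T ^^ n) x \<in> X"
  by (induction n) auto

lemma local_homeo_image_subset: "local_homeo X T \<Longrightarrow> T ` X \<subseteq> X"
  unfolding local_homeo_def by blast

lemma local_homeo_open_map:
  assumes lh: "local_homeo X T"
  shows "open_map (top_of_set X) (top_of_set X) T"
  unfolding open_map_def
proof (intro allI impI)
  fix W assume W: "openin (top_of_set X) W"
  show "openin (top_of_set X) (T ` W)"
  proof (subst openin_subopen, intro ballI)
    fix y assume "y \<in> T ` W"
    then obtain w where w: "w \<in> W" "y = T w" by auto
    have "w \<in> X" using openin_imp_subset[OF W] w(1) by blast
    then obtain U g where U: "openin (top_of_set X) U" "w \<in> U"
      "openin (top_of_set X) (T ` U)" "homeomorphism U (T ` U) T g"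
      using lh unfolding local_homeo_def by blast
    have "openin (top_of_set U) (U \<inter> W)"
      using openin_Int[OF U(1) W] openin_imp_subset[OF U(1)] by (meson inf_le1 openin_subset_trans)
    then have "openin (top_of_set (T ` U)) (T ` (U \<inter> W))"
      using homeomorphism_imp_open_map[OF U(4)] by blast
    then have "openin (top_of_set X) (T ` (U \<inter> W))"
      using U(3) openin_trans by blast
    then show "\<exists>T'. openin (top_of_set X) T' \<and> y \<in> T' \<and> T' \<subseteq> T ` W"
      using w U(2) by blast
  qed
qed

lemma open_map_funpow: "open_map X X f \<Longrightarrow> open_map X X (f ^^ n)"
  by (induction n) (simp_all add: open_map_id open_map_compose funpow_Suc_right)

lemma closure_preim_open_map:
  assumes "open_map (top_of_set X) (top_of_set Y) f"
    and "A \<subseteq> Y" and "z \<in> X" and fz: "f z \<in> closure A"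
  shows "z \<in> closure {x \<in> X. f x \<in> A}"
  unfolding closure_iff_nhds_not_empty
proof (intro allI impI)
  fix B S assume S: "S \<subseteq> B" "open S" "z \<in> S"
  have "openin (top_of_set Y) (f ` (X \<inter> S))"
    using assms(1) S(2) unfolding open_map_def by (simp add: openin_open_Int)
  then obtain G where G: "open G" "f ` (X \<inter> S) = Y \<inter> G"
    unfolding openin_open by blast
  have "f z \<in> G" using G(2) \<open>z \<in> X\<close> S(3) by blast
  then obtain a where "a \<in> A" "a \<in> G"
    using fz[unfolded closure_iff_nhds_not_empty, rule_format, of G G] G(1) by blast
  then have "a \<in> f ` (X \<inter> S)" using G(2) \<open>A \<subseteq> Y\<close> by blast
  then obtain w where "w \<in> X" "w \<in> S" "f w = a" by blast
  then show "{x \<in> X. f x \<in> A} \<inter> B \<noteq> {}" using \<open>a \<in> A\<close> S(1) by blast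
qed

lemma preim_mono: "A \<subseteq> B \<Longrightarrow> preim X T n A \<subseteq> preim X T n B"
  unfolding preim_def by auto

lemma preim_one_preim:
  "T ` X \<subseteq> X \<Longrightarrow> preim X T 1 (preim X T n A) = preim X T (Suc n) A"
  unfolding preim_def by (auto simp: funpow_swap1)

lemma rok_tower_openin: "rok_tower X T N U \<Longrightarrow> k < N \<Longrightarrow> openin (top_of_set X) (U k)"
  unfolding rok_tower_def by blast

lemma rok_tower_Suc: "rok_tower X T N U \<Longrightarrow> Suc k < N \<Longrightarrow> U (Suc k) = preim X T 1 (U k)"
  unfolding rok_tower_def by (metis diff_Suc_1 le_add1 plus_1_eq_Suc)

lemma rok_tower_closure_disjoint:
  "rok_tower X T N U \<Longrightarrow> j < N \<Longrightarrow> k < N \<Longrightarrow> j \<noteq> k \<Longrightarrow> closure (U j) \<inter> closure (U k) = {}"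
  unfolding rok_tower_def by blast

lemma rok_tower_level:
  assumes "T ` X \<subseteq> X" and tower: "rok_tower X T N U" and "l < N"
  shows "U l = preim X T l (U 0)"
  using \<open>l < N\<close>
proof (induction l)
  case 0
  then have "U 0 \<subseteq> X" using openin_imp_subset[OF rok_tower_openin[OF tower]] by blast
  then show ?case unfolding preim_def by auto
next
  case (Suc l)
  then show ?case
    using rok_tower_Suc[OF tower] preim_one_preim[OF \<open>T ` X \<subseteq> X\<close>] by simp
qed

lemma rok_tower_preim_closure_base_disjoint:
  assumes lh: "local_homeo X T" and tower: "rok_tower X T N U"
    and "a \<le> m" "m < a + N" "a \<le> n" "n < a + N" "m \<noteq> n"
  shows "preim X T m (closure (U 0)) \<inter> preim X T n (closure (U 0)) = {}"
proof -
  have TX: "T ` X \<subseteq> X" using lh by (rule local_homeo_image_subset)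
  have "0 < N" using \<open>a \<le> m\<close> \<open>m < a + N\<close> by linarith
  have U0X: "U 0 \<subseteq> X" using openin_imp_subset[OF rok_tower_openin[OF tower \<open>0 < N\<close>]] .
  have ordered: "preim X T p (closure (U 0)) \<inter> preim X T q (closure (U 0)) = {}"
    if "p < q" "q - p < N" for p q
  proof -
    { fix y assume y: "y \<in> X" "(T ^^ p) y \<in> closure (U 0)" "(T ^^ q) y \<in> closure (U 0)"
      define z where "z = (T ^^ p) y"
      have "(T ^^ (q - p)) z = (T ^^ q) y"
        unfolding z_def using \<open>p < q\<close>
        by (metis funpow_add le_add_diff_inverse2 less_imp_le o_apply)
      then have "(T ^^ (q - p)) z \<in> closure (U 0)" using y(3) by simp
      moreover have "z \<in> X" using funpow_in_invariant[OF TX y(1)] by (simp add: z_def)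
      ultimately have "z \<in> closure {x \<in> X. (T ^^ (q - p)) x \<in> U 0}"
        by (intro closure_preim_open_map[OF open_map_funpow[OF local_homeo_open_map[OF lh]] U0X])
      then have "z \<in> closure (preim X T (q - p) (U 0))" by (simp add: preim_def)
      then have "z \<in> closure (U (q - p))"
        using rok_tower_level[OF TX tower \<open>q - p < N\<close>] by simp
      then have False
        using rok_tower_closure_disjoint[OF tower \<open>0 < N\<close> \<open>q - p < N\<close>] y(2) that
        by (auto simp: z_def) }
    then show ?thesis unfolding preim_def by blast
  qed
  show ?thesis
  proof (cases "m < n")
    case True
    then show ?thesis using ordered[of m n] assms(3-6) by simp
  next
    case False
    then have "n < m" using \<open>m \<noteq> n\<close> by simp
    then show ?thesis using ordered[of n m] assms(3-6) by (simp add: Int_commute)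
  qed
qed

lemma window_containing_shifts:
  fixes M l :: nat
  assumes "l < 4 * M + 4"
  shows "\<exists>b<2. \<forall>e::int. \<bar>e\<bar> \<le> int M \<longrightarrow>
           int (b * (2 * M + 2)) \<le> e + int (l + M) \<and>
           e + int (l + M) < int (b * (2 * M + 2) + (4 * M + 4))"
proof (cases "l + 2 * M < 4 * M + 4")
  case True
  then show ?thesis by (intro exI[of _ 0]) auto
next
  case False
  then show ?thesis using assms by (intro exI[of _ 1]) auto
qed

lemma finite_int_set_bounded: "finite (E :: int set) \<Longrightarrow> \<exists>M. \<forall>e\<in>E. \<bar>e\<bar> \<le> int M"
proof (intro exI ballI)
  fix e assume "finite E" "e \<in> E"
  then have "\<bar>e\<bar> \<le> Max (abs ` E)" by (intro Max_ge) auto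
  then show "\<bar>e\<bar> \<le> int (nat (Max (abs ` E)))" by linarith
qed

lemma rok_towers_cover_in_window:
  fixes M :: nat
  defines "N \<equiv> 4 * M + 4"
  assumes TX: "T ` X \<subseteq> X" and towers: "\<And>i. i < m \<Longrightarrow> rok_tower X T N (Us i)"
    and cover: "X \<subseteq> (\<Union>i<m. \<Union>k<N. Us i k)" and "x \<in> X"
  shows "\<exists>j<m. \<exists>b<2. \<exists>n. x \<in> preim X T n (Us j 0) \<and>
           (\<forall>e::int. \<bar>e\<bar> \<le> int M \<longrightarrow> (\<exists>k\<in>{b * (2 * M + 2)..<b * (2 * M + 2) + N}. int k = e + int n))"
proof -
  obtain j l where "j < m" "l < N" "(T ^^ M) x \<in> Us j l"
    using cover funpow_in_invariant[OF TX \<open>x \<in> X\<close>] by blast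
  then have "(T ^^ l) ((T ^^ M) x) \<in> Us j 0"
    using rok_tower_level[OF TX towers[OF \<open>j < m\<close>] \<open>l < N\<close>] unfolding preim_def by blast
  then have x_in: "x \<in> preim X T (l + M) (Us j 0)"
    using \<open>x \<in> X\<close> unfolding preim_def by (simp add: funpow_add)
  obtain b where "b < 2" and window: "\<And>e. \<bar>e\<bar> \<le> int M \<Longrightarrow>
      int (b * (2 * M + 2)) \<le> e + int (l + M) \<and> e + int (l + M) < int (b * (2 * M + 2) + N)"
    using window_containing_shifts \<open>l < N\<close> unfolding N_def by blast
  define t where "t = b * (2 * M + 2)"
  have "\<exists>k\<in>{t..<t + N}. int k = e + int (l + M)" if "\<bar>e\<bar> \<le> int M" for e
    using window[OF that, folded t_def] by (intro bexI[of _ "nat (e + int (l + M))"]) auto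
  then show ?thesis using \<open>j < m\<close> \<open>b < 2\<close> x_in unfolding t_def by blast
qed

lemma rok_cond_imp_tow_cond:
  assumes lh: "local_homeo X T" and rok: "rok_cond X T d"
  shows "tow_cond X T (2 * d + 1)"
  unfolding tow_cond_def
proof (intro allI impI)
  fix E :: "int set" assume "finite E"
  then obtain M where E_bound: "\<And>e. e \<in> E \<Longrightarrow> \<bar>e\<bar> \<le> int M"
    using finite_int_set_bounded by blast
  define N where "N = 4 * M + 4"
  have "N \<ge> 1" by (simp add: N_def)
  then obtain m Us where "m \<le> d + 1" and towers: "\<And>i. i < m \<Longrightarrow> rok_tower X T N (Us i)"
    and cover: "X \<subseteq> (\<Union>i<m. \<Union>k<N. Us i k)"
    using rok[unfolded rok_cond_def, rule_format, OF \<open>N \<ge> 1\<close>] by blast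
  have TX: "T ` X \<subseteq> X" using lh by (rule local_homeo_image_subset)
  define V where "V i = Us (i div 2) 0" for i
  define S where "S i = {(i mod 2) * (2 * M + 2) ..< (i mod 2) * (2 * M + 2) + N}" for i
  have V_open: "openin (top_of_set X) (V i)" if "i < 2 * m" for i
    using rok_tower_openin[OF towers, of "i div 2" 0] that unfolding V_def N_def by simp
  have window_disjoint: "preim X T n (closure (V i)) \<inter> preim X T n' (closure (V i)) = {}"
    if "i < 2 * m" "n \<in> S i" "n' \<in> S i" "n \<noteq> n'" for i n n'
    unfolding V_def
    by (rule rok_tower_preim_closure_base_disjoint[OF lh towers, where a = "(i mod 2) * (2 * M + 2)"])
       (use that in \<open>auto simp: S_def\<close>)
  have window_covers: "\<exists>i<2 * m. \<exists>n\<in>S i. x \<in> preim X T n (V i) \<and> (\<forall>e\<in>E. \<exists>k\<in>S i. int k = e + int n)"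
    if "x \<in> X" for x
  proof -
    obtain j b n where "j < m" "b < 2" and x_in: "x \<in> preim X T n (Us j 0)" and window:
      "\<And>e. \<bar>e\<bar> \<le> int M \<Longrightarrow> \<exists>k\<in>{b * (2 * M + 2)..<b * (2 * M + 2) + N}. int k = e + int n"
      using rok_towers_cover_in_window[OF TX towers[unfolded N_def] cover[unfolded N_def] \<open>x \<in> X\<close>,
          folded N_def] by blast
    have i: "2 * j + b < 2 * m" "(2 * j + b) div 2 = j"
      "S (2 * j + b) = {b * (2 * M + 2)..<b * (2 * M + 2) + N}"
      using \<open>j < m\<close> \<open>b < 2\<close> by (auto simp: S_def)
    have "n \<in> S (2 * j + b)" using window[of 0] i(3) by auto
    then show ?thesis
      using i x_in window E_bound unfolding V_def by (intro exI[of _ "2 * j + b"]) auto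
  qed
  show "\<exists>(s::nat) V S c. (\<forall>i<s. openin (top_of_set X) (V i) \<and> finite (S i)) \<and>
        (\<forall>i<s. \<forall>m\<in>S i. \<forall>n\<in>S i. m \<noteq> n \<longrightarrow>
            preim X T m (closure (V i)) \<inter> preim X T n (closure (V i)) = {}) \<and>
        (\<forall>i<s. \<forall>n\<in>S i. c i n \<le> 2 * d + 1) \<and>
        (\<forall>i<s. \<forall>n\<in>S i. \<forall>j<s. \<forall>m\<in>S j. (i, n) \<noteq> (j, m) \<and> c i n = c j m \<longrightarrow>
            preim X T n (V i) \<inter> preim X T m (V j) = {}) \<and>
        X \<subseteq> (\<Union>i<s. \<Union>n\<in>S i. preim X T n (V i)) \<and>
        (\<forall>x\<in>X. \<exists>i<s. \<exists>n\<in>S i. x \<in> preim X T n (V i) \<and> (\<forall>e\<in>E. \<exists>k\<in>S i. int k = e + int n))"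
  proof (rule exI[where x = "2 * m"], rule exI[where x = V], rule exI[where x = S],
      rule exI[where x = "\<lambda>i n. i"], intro conjI)
    show "\<forall>i<2 * m. openin (top_of_set X) (V i) \<and> finite (S i)"
      using V_open by (simp add: S_def)
    show "\<forall>i<2 * m. \<forall>n\<in>S i. \<forall>n'\<in>S i. n \<noteq> n' \<longrightarrow>
            preim X T n (closure (V i)) \<inter> preim X T n' (closure (V i)) = {}"
      using window_disjoint by blast
    show "\<forall>i<2 * m. \<forall>n\<in>S i. i \<le> 2 * d + 1"
      using \<open>m \<le> d + 1\<close> by auto
    show "\<forall>i<2 * m. \<forall>n\<in>S i. \<forall>j<2 * m. \<forall>n'\<in>S j. (i, n) \<noteq> (j, n') \<and> i = j \<longrightarrow>
            preim X T n (V i) \<inter> preim X T n' (V j) = {}"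
      using window_disjoint preim_mono[OF closure_subset] by blast
    show "X \<subseteq> (\<Union>i<2 * m. \<Union>n\<in>S i. preim X T n (V i))"
      using window_covers by blast
  qed (use window_covers in blast)
qed

lemma INF_enat_le_affine:
  assumes "\<And>d. P d \<Longrightarrow> Q (2 * d + 1)"
  shows "(INF d\<in>{d. Q d}. enat d) \<le> 2 * (INF d\<in>{d. P d}. enat d) + 1"
proof (cases "\<exists>d. P d")
  case False
  then show ?thesis by (simp add: top_enat_def numeral_eq_enat)
next
  case True
  then have "(INF d\<in>{d. P d}. enat d) \<in> enat ` {d. P d}"
    unfolding Inf_enat_def by (auto intro: LeastI)
  then obtain d where "P d" and "(INF d\<in>{d. P d}. enat d) = enat d" by auto
  moreover have "(INF d\<in>{d. Q d}. enat d) \<le> enat (2 * d + 1)"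
    using assms[OF \<open>P d\<close>] by (intro INF_lower) auto
  ultimately show ?thesis by (simp add: one_enat_def numeral_eq_enat)
qed

theorem lemma5p2:
  fixes X :: "'a::metric_space set" and T :: "'a \<Rightarrow> 'a"
  assumes "compact X"
    and "local_homeo X T"
  shows "dim_tow X T \<le> 2 * dim_Rok X T + 1"
  unfolding dim_tow_def dim_Rok_def
  by (rule INF_enat_le_affine) (rule rok_cond_imp_tow_cond[OF assms(2)])

end
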